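(* Let $n\geq 2$ be an integer. Then $$\frac{\Delta(\Psi_n(x))}{\Delta(\Phi_n(x))}=\begin{cases}\dfrac{2^{\varphi(n)}}{p}&\text{if } n=p^\alpha \text{ for some prime } p \text{ and some positive integer } \alpha;\\[1ex] 2^{\varphi(n)}&\text{otherwise}.\end{cases}$$
   Context: The Fibonacci polynomials are defined by $F_1(x)=1$, $F_2(x)=x$, and $F_n(x)=xF_{n-1}(x)+F_{n-2}(x)$ for $n\geq 3$. For $n\geq 2$, the $n$-th fibotomic polynomial $\Psi_n(x)\in\mathbb{Z}[x]$ is the product of the monic irreducible factors of $F_n(x)$ which are not factors of $F_k(x)$ for any $k<n$; also $\Psi_1(x)=1$. For $n\ge2$, $\Psi_n$ is monic of degree $\varphi(n)$ (Euler's totient). $\Phi_n(x)$ is the $n$-th cyclotomic polynomial. $\Delta(f)$ denotes the discriminant of a monic polynomial $f$ with roots $r_1,\dots,r_d$, namely $\prod_{i<j}(r_i-r_j)^2$. *)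

theory Defs
  imports "HOL-Computational_Algebra.Computational_Algebra" "HOL-Number_Theory.Number_Theory"
begin

fun fib_poly :: "nat \<Rightarrow> int poly" where
  "fib_poly 0 = 0"
| "fib_poly (Suc 0) = 1"
| "fib_poly (Suc (Suc n)) = [:0, 1:] * fib_poly (Suc n) + fib_poly n"

definition fibotomic :: "nat \<Rightarrow> int poly" where
  "fibotomic n = (if n \<le> 1 then 1 else
     \<Prod>{q. lead_coeff q = 1 \<and> irreducible q \<and> q dvd fib_poly n \<and> (\<forall>k\<in>{1..<n}. \<not> q dvd fib_poly k)})"

definition cyclotomic :: "nat \<Rightarrow> complex poly" where
  "cyclotomic n = (\<Prod>k\<in>{k\<in>{1..n}. coprime k n}. [:- cis (2 * pi * real k / real n), 1:])"

text \<open>Discriminant of a monic complex polynomial: product over i<j of (r_i - r_j)^2,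
  where r_1..r_d are its roots listed with multiplicity (independent of the order).\<close>
definition disc :: "complex poly \<Rightarrow> complex" where
  "disc f = (let rs = (SOME xs. mset xs = proots f) in
     \<Prod>j<length rs. \<Prod>i<j. (rs ! i - rs ! j)^2)"

end

theory Submission
  imports Defs
begin

(* Since F_n(2i cos t) sin t = i^(n-1) sin(nt), the Fibonacci polynomial F_n has the n - 1 simple
   roots 2i cos(k pi/n), 0 < k < n.  A root with gcd(k, n) = d > 1 is already a root of F_(n/d),
   which divides F_n, so squarefreeness of F_n keeps it out of Psi_n.  Hence, with a_k = e^(i k pi/n),
   the roots of Psi_n are y_k = i(a_k + 1/a_k) and those of Phi_n are z_k = a_k^2, k coprime to n.
   Factoring y_k - y_l and z_k - z_l and using the reflection k -> n - k, which sends a_k to -1/a_k,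
   gives Delta(Psi_n) Phi_n(1) = 2^phi(n) Delta(Phi_n).  Finally Phi_n(1) = e^Lambda(n), i.e. p for
   n = p^a and 1 otherwise, because over the divisors d > 1 of n both Phi_d(1) and e^Lambda(d)
   multiply to n. *)

lemma map_poly_of_int_add:
  "map_poly of_int (p + q) = (map_poly of_int p + map_poly of_int q :: 'a :: ring_1 poly)"
  by (rule poly_eqI) (simp add: coeff_map_poly)

lemma map_poly_of_int_mult:
  "map_poly of_int (p * q) = (map_poly of_int p * map_poly of_int q :: 'a :: comm_ring_1 poly)"
proof (induction p)
  case (pCons a p)
  then show ?case
    by (simp add: map_poly_of_int_add map_poly_smult map_poly_pCons)
qed simp

lemma map_poly_of_int_prod_mset:
  "map_poly of_int (prod_mset M) = (\<Prod>q\<in>#M. map_poly of_int q :: 'a :: comm_ring_1 poly)"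
  by (induction M) (simp_all add: map_poly_of_int_mult)

lemma map_poly_of_int_prod:
  "map_poly of_int (\<Prod>q\<in>A. f q) = (\<Prod>q\<in>A. map_poly of_int (f q) :: 'a :: comm_ring_1 poly)"
  by (induction A rule: infinite_finite_induct) (simp_all add: map_poly_of_int_mult)

lemma map_poly_of_int_eq_0_iff [simp]:
  "map_poly of_int p = (0 :: 'a :: {comm_ring_1, ring_char_0} poly) \<longleftrightarrow> p = 0"
  by (simp add: map_poly_eq_0_iff)

lemma degree_map_poly_of_int [simp]:
  "degree (map_poly of_int p :: 'a :: {comm_ring_1, ring_char_0} poly) = degree p"
  by (cases "p = 0") (auto intro!: map_poly_degree_eq)

lemma map_poly_of_int_dvd:
  "p dvd q \<Longrightarrow> map_poly of_int p dvd (map_poly of_int q :: 'a :: comm_ring_1 poly)"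
  by (elim dvdE) (simp add: map_poly_of_int_mult)

lemma poly_map_poly_of_int_dvd_eq_0:
  assumes "p dvd q" "poly (map_poly of_int p) x = (0 :: 'a :: comm_ring_1)"
  shows "poly (map_poly of_int q) x = 0"
  using assms by (auto elim!: dvdE simp: map_poly_of_int_mult)

lemma proots_eq_mset_setI:
  fixes p :: "complex poly"
  assumes "p \<noteq> 0" "finite A" "\<And>x. x \<in> A \<Longrightarrow> poly p x = 0" "card A = degree p"
  shows "proots p = mset_set A"
proof -
  have "mset_set A \<subseteq># proots p"
  proof (rule mset_subset_eqI)
    fix x
    show "count (mset_set A) x \<le> count (proots p) x"
      using assms order_root[of p x] by (auto simp: count_mset_set')
  qed
  moreover have "size (mset_set A) = size (proots p)"
    using assms by (simp add: size_proots_complex)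
  ultimately show ?thesis
    by (metis mset_subset_size subset_mset.le_imp_less_or_eq less_irrefl)
qed

lemma rsquarefree_if_proots_eq_mset_set:
  assumes "p \<noteq> 0" "proots p = mset_set A"
  shows "rsquarefree p"
  unfolding rsquarefree_def
proof (intro conjI allI assms(1))
  fix a
  have "Polynomial.order a p = count (mset_set A) a"
    using assms by (metis count_proots)
  then show "Polynomial.order a p = 0 \<or> Polynomial.order a p = 1"
    by (simp add: count_mset_set')
qed

lemma proots_eq_mset_set_if_rsquarefree:
  assumes "rsquarefree p"
  shows "proots p = mset_set {x. poly p x = 0}"
proof (rule multiset_eqI)
  fix x
  have "p \<noteq> 0" using assms by (simp add: rsquarefree_def)
  then show "count (proots p) x = count (mset_set {x. poly p x = 0}) x"
    using assms poly_roots_finite[of p] rsquarefree_root_order[of p x]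
    by (auto simp: count_mset_set' order_root)
qed

lemma rsquarefree_dvd:
  assumes "rsquarefree q" "p dvd q"
  shows "rsquarefree p"
proof -
  have "q \<noteq> 0" using assms(1) by (simp add: rsquarefree_def)
  have "Polynomial.order a q = 0 \<or> Polynomial.order a q = 1" for a
    using assms(1) by (simp add: rsquarefree_def)
  then have "Polynomial.order a p \<le> 1" for a
    using dvd_imp_order_le[OF \<open>q \<noteq> 0\<close> assms(2), of a] by (metis le_trans le_0_eq le_refl zero_le_one)
  moreover have "p \<noteq> 0" using \<open>q \<noteq> 0\<close> assms(2) by auto
  ultimately show ?thesis by (auto simp: rsquarefree_def le_Suc_eq)
qed

lemma rsquarefree_mult_no_common_root:
  assumes "rsquarefree (p * q)" "poly p x = 0"
  shows "poly q x \<noteq> 0"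
proof
  assume "poly q x = 0"
  have "p \<noteq> 0" "q \<noteq> 0" using assms(1) by (auto simp: rsquarefree_def)
  moreover have "Polynomial.order x p > 0" "Polynomial.order x q > 0"
    using assms(2) \<open>poly q x = 0\<close> \<open>p \<noteq> 0\<close> \<open>q \<noteq> 0\<close> by (simp_all add: order_gt_0_iff)
  ultimately have "Polynomial.order x (p * q) \<ge> 2"
    by (simp add: order_mult)
  moreover have "Polynomial.order x (p * q) = 0 \<or> Polynomial.order x (p * q) = 1"
    using assms(1) by (simp add: rsquarefree_def)
  ultimately show False by auto
qed

lemma lead_coeff_normalized_dvd_monic:
  fixes p q :: "int poly"
  assumes "normalize q = q" "q dvd p" "lead_coeff p = 1"
  shows "lead_coeff q = 1"
proof -
  obtain r where "p = q * r" using assms(2) ..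
  then have "lead_coeff q * lead_coeff r = 1" using assms(3) by (simp add: lead_coeff_mult)
  moreover have "c div sgn c = c \<Longrightarrow> c \<ge> 0" for c :: int
    by (cases "c < 0") (auto simp: sgn_if)
  then have "lead_coeff q \<ge> 0"
    using arg_cong[OF assms(1), of "\<lambda>f. Polynomial.coeff f (degree q)"] by simp
  ultimately show ?thesis by (auto simp: zmult_eq_1_iff)
qed

lemma prod_prime_factors_dvd:
  fixes x :: "'a :: factorial_semiring"
  assumes "x \<noteq> 0" "A \<subseteq> prime_factors x"
  shows "\<Prod>A dvd x"
proof -
  have "finite A" using assms(2) finite_subset by blast
  then have "\<Prod>A = prod_mset (mset_set A)" by (simp add: prod_unfold_prod_mset)
  also have "\<dots> dvd prod_mset (prime_factorization x)"
    using assms(2) \<open>finite A\<close>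
    by (intro prod_mset_subset_imp_dvd mset_subset_eqI) (auto simp: count_mset_set')
  also have "\<dots> dvd x"
    using prod_mset_prime_factorization_weak[OF assms(1)] by (metis dvd_normalize_iff dvd_refl)
  finally show ?thesis .
qed

section \<open>Discriminants from root sets\<close>

definition disc_sign :: "nat \<Rightarrow> complex" where
  "disc_sign L = (\<Prod>j<L. (-1) ^ j)"

definition root_diff_prod :: "complex set \<Rightarrow> complex" where
  "root_diff_prod S = (\<Prod>a\<in>S. \<Prod>b\<in>S - {a}. (a - b))"

lemma disc_sign_square: "disc_sign L * disc_sign L = 1"
  by (simp add: disc_sign_def flip: prod.distrib power_add)

lemma root_diff_prod_image:
  assumes "inj_on f A"
  shows "root_diff_prod (f ` A) = (\<Prod>k\<in>A. \<Prod>l\<in>A - {k}. (f k - f l))"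
proof -
  have "f ` A - {f k} = f ` (A - {k})" "inj_on f (A - {k})" if "k \<in> A" for k
    using assms that by (auto simp: inj_on_def)
  then show ?thesis
    using assms by (simp add: root_diff_prod_def prod.reindex)
qed

lemma prod_offdiag_eq_prod_pairs:
  fixes g :: "nat \<Rightarrow> nat \<Rightarrow> 'a :: comm_monoid_mult"
  shows "(\<Prod>j<L. \<Prod>i\<in>{..<L} - {j}. g j i) = (\<Prod>j<L. \<Prod>i<j. g i j * g j i)"
proof (induction L)
  case (Suc L)
  have "{..<Suc L} - {j} = insert L ({..<L} - {j})" if "j < L" for j
    using that by auto
  moreover have "{..<Suc L} - {L} = {..<L}" by auto
  ultimately have "(\<Prod>j<Suc L. \<Prod>i\<in>{..<Suc L} - {j}. g j i)
      = (\<Prod>j<L. g j L * (\<Prod>i\<in>{..<L} - {j}. g j i)) * (\<Prod>i<L. g L i)"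
    by simp
  also have "\<dots> = (\<Prod>j<L. \<Prod>i\<in>{..<L} - {j}. g j i) * (\<Prod>i<L. g i L * g L i)"
    by (simp add: prod.distrib ac_simps)
  finally show ?case using Suc by simp
qed simp

lemma prod_pair_sq_diffs_distinct:
  assumes "distinct rs"
  shows "(\<Prod>j<length rs. \<Prod>i<j. (rs ! i - rs ! j) ^ 2)
         = disc_sign (length rs) * root_diff_prod (set rs)"
proof -
  define L where "L = length rs"
  have "set rs = (!) rs ` {..<L}" by (auto simp: L_def in_set_conv_nth)
  moreover have "inj_on ((!) rs) {..<L}" using assms by (simp add: L_def inj_on_nth)
  ultimately have "root_diff_prod (set rs) = (\<Prod>j<L. \<Prod>i\<in>{..<L} - {j}. (rs ! j - rs ! i))"
    by (simp add: root_diff_prod_image)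
  also have "\<dots> = (\<Prod>j<L. \<Prod>i<j. - ((rs ! i - rs ! j) ^ 2))"
    by (simp add: prod_offdiag_eq_prod_pairs power2_eq_square algebra_simps)
  also have "\<dots> = disc_sign L * (\<Prod>j<L. \<Prod>i<j. (rs ! i - rs ! j) ^ 2)"
    by (simp add: prod_uminus disc_sign_def prod.distrib)
  finally show ?thesis
    using disc_sign_square[of L] by (simp add: L_def)
qed

lemma disc_eq_root_diff_prod:
  assumes "proots f = mset_set S" "finite S"
  shows "disc f = disc_sign (card S) * root_diff_prod S"
proof -
  define rs where "rs = (SOME xs. mset xs = proots f)"
  have rs: "mset rs = mset_set S"
    unfolding rs_def assms(1)[symmetric] by (rule someI_ex) (rule ex_mset)
  have "set rs = S" using arg_cong[OF rs, of set_mset] assms(2) by simp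
  moreover have "length rs = card S" using arg_cong[OF rs, of size] by simp
  moreover have "distinct rs" using calculation by (intro card_distinct) simp
  ultimately show ?thesis
    using prod_pair_sq_diffs_distinct[of rs] by (simp add: disc_def rs_def[symmetric] Let_def)
qed

section \<open>Fibonacci polynomials and their roots\<close>

lemma degree_lead_coeff_fib_poly:
  "degree (fib_poly n) = n - 1 \<and> (n > 0 \<longrightarrow> lead_coeff (fib_poly n) = 1)"
proof (induction n rule: fib_poly.induct)
  case (3 n)
  define XF where "XF = [:0, 1:] * fib_poly (Suc n)"
  have "fib_poly (Suc n) \<noteq> 0" using 3 by auto
  then have "degree XF = Suc n" and "lead_coeff XF = 1"
    using 3 by (auto simp: XF_def degree_mult_eq lead_coeff_mult)
  moreover have "fib_poly (Suc (Suc n)) = fib_poly n + XF" by (simp add: XF_def)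
  moreover have "degree (fib_poly n) < Suc n" using 3 by simp
  ultimately show ?case
    using degree_add_eq_right[of "fib_poly n" XF] lead_coeff_add_le[of "fib_poly n" XF]
    by (simp add: add.commute[of XF])
qed simp_all

lemma degree_fib_poly [simp]: "degree (fib_poly n) = n - 1"
  using degree_lead_coeff_fib_poly by blast

lemma lead_coeff_fib_poly: "n > 0 \<Longrightarrow> lead_coeff (fib_poly n) = 1"
  using degree_lead_coeff_fib_poly by blast

lemma fib_poly_eq_0_iff [simp]: "fib_poly n = 0 \<longleftrightarrow> n = 0"
  using lead_coeff_fib_poly[of n] by (cases n) auto

lemma fib_poly_add:
  "fib_poly (a + b + 1) = fib_poly (a + 1) * fib_poly (b + 1) + fib_poly a * fib_poly b"
proof (induction a rule: fib_poly.induct)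
  case (3 n)
  have "fib_poly (Suc (Suc n) + b + 1) = [:0, 1:] * fib_poly (Suc n + b + 1) + fib_poly (n + b + 1)"
    by (simp add: add.commute add.left_commute)
  then show ?case
    unfolding "3.IH" by (simp add: algebra_simps)
qed simp_all

lemma fib_poly_dvd_mult: "fib_poly m dvd fib_poly (m * k)"
proof (induction k)
  case (Suc k)
  show ?case
  proof (cases m)
    case (Suc j)
    have "fib_poly (m * Suc k) = fib_poly (m * k + j + 1)" by (simp add: Suc algebra_simps)
    also have "\<dots> = fib_poly (m * k + 1) * fib_poly m + fib_poly (m * k) * fib_poly j"
      using fib_poly_add[of "m * k" j] by (simp add: Suc)
    finally show ?thesis using Suc.IH by simp
  qed simp
qed simp

lemma fib_poly_dvd: "m dvd n \<Longrightarrow> fib_poly m dvd fib_poly n"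
  by (elim dvdE) (simp add: fib_poly_dvd_mult)

text \<open>Up to powers of \<open>\<i>\<close>, \<open>F\<^sub>n\<close> is a Chebyshev polynomial of the second kind.\<close>

lemma poly_fib_poly_cos:
  "\<i> * poly (map_poly of_int (fib_poly n)) (2 * \<i> * complex_of_real (cos t)) * complex_of_real (sin t)
     = \<i> ^ n * complex_of_real (sin (real n * t))"
proof (induction n rule: fib_poly.induct)
  case (3 n)
  define x where "x = 2 * \<i> * complex_of_real (cos t)"
  have sin_rec: "sin (real (Suc (Suc n)) * t) = 2 * cos t * sin (real (Suc n) * t) - sin (real n * t)"
  proof -
    have "sin (a + t) = 2 * cos t * sin a - sin (a - t)" for a
      by (simp add: sin_add sin_diff algebra_simps)
    moreover have "real (Suc (Suc n)) * t = real (Suc n) * t + t" "real n * t = real (Suc n) * t - t"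
      by (simp_all add: algebra_simps)
    ultimately show ?thesis by simp
  qed
  have "\<i> * poly (map_poly of_int (fib_poly (Suc (Suc n)))) x * complex_of_real (sin t)
      = x * (\<i> * poly (map_poly of_int (fib_poly (Suc n))) x * complex_of_real (sin t))
        + \<i> * poly (map_poly of_int (fib_poly n)) x * complex_of_real (sin t)"
    by (simp add: map_poly_of_int_add map_poly_of_int_mult map_poly_pCons algebra_simps)
  also have "\<dots> = x * (\<i> ^ Suc n * complex_of_real (sin (real (Suc n) * t)))
        + \<i> ^ n * complex_of_real (sin (real n * t))"
    using 3 by (simp add: x_def)
  also have "\<dots> = \<i> ^ Suc (Suc n) * complex_of_real (sin (real (Suc (Suc n)) * t))"
  proof -
    have "2 * \<i> * c * (\<i> ^ Suc n * s1) + \<i> ^ n * s0 = \<i> ^ Suc (Suc n) * (2 * c * s1 - s0)"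
      for c s1 s0 :: complex
      by (simp add: algebra_simps)
    then show ?thesis
      unfolding sin_rec x_def by simp
  qed
  finally show ?case by (simp add: x_def)
qed simp_all

definition fib_root :: "nat \<Rightarrow> nat \<Rightarrow> complex" where
  "fib_root n k = 2 * \<i> * complex_of_real (cos (real k * pi / real n))"

lemma fib_root_eq_imp_mult_eq:
  assumes "k \<le> n" "l \<le> m" "0 < n" "0 < m" "fib_root n k = fib_root m l"
  shows "k * m = l * n"
proof -
  have "real k * pi \<le> real n * pi" "real l * pi \<le> real m * pi"
    using assms(1,2) by (simp_all add: mult_right_mono)
  then have "real k * pi / real n \<le> pi" "real l * pi / real m \<le> pi"
    using assms(3,4) by (simp_all add: pos_divide_le_eq mult.commute)
  moreover have "cos (real k * pi / real n) = cos (real l * pi / real m)"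
    using assms(5) by (simp add: fib_root_def)
  ultimately have "real k * pi / real n = real l * pi / real m"
    using cos_inj_pi[of "real k * pi / real n" "real l * pi / real m"] by simp
  then have "real (k * m) = real (l * n)"
    using assms(3,4) by (auto simp: field_simps)
  then show ?thesis by (simp only: of_nat_eq_iff)
qed

lemma inj_on_fib_root: "inj_on (fib_root n) {..n}"
proof (cases "n = 0")
  case False
  show ?thesis
  proof (rule inj_onI)
    fix k l
    assume "k \<in> {..n}" "l \<in> {..n}" "fib_root n k = fib_root n l"
    then have "k * n = l * n" using False by (intro fib_root_eq_imp_mult_eq) auto
    then show "k = l" using False by simp
  qed
qed simp

lemma fib_root_cancel: "d dvd k \<Longrightarrow> d dvd n \<Longrightarrow> fib_root (n div d) (k div d) = fib_root n k"
  by (cases "d = 0") (auto elim!: dvdE simp: fib_root_def)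

lemma poly_fib_poly_fib_root:
  assumes "0 < k" "k < n"
  shows "poly (map_poly of_int (fib_poly n)) (fib_root n k) = 0"
proof -
  define t where "t = real k * pi / real n"
  have "0 < t" "t < pi" using assms by (auto simp: t_def field_simps)
  then have "sin t \<noteq> 0" using sin_gt_zero by fastforce
  moreover have "sin (real n * t) = 0"
    using assms by (simp add: t_def sin_npi)
  ultimately show ?thesis
    using poly_fib_poly_cos[of n t] by (simp add: fib_root_def t_def)
qed

lemma proots_fib_poly:
  assumes "0 < n"
  shows "proots (map_poly complex_of_int (fib_poly n)) = mset_set (fib_root n ` {0<..<n})"
proof (rule proots_eq_mset_setI)
  show "card (fib_root n ` {0<..<n}) = degree (map_poly complex_of_int (fib_poly n))"
  proof -
    have "inj_on (fib_root n) {0<..<n}" by (rule inj_on_subset[OF inj_on_fib_root]) auto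
    then show ?thesis by (simp add: card_image)
  qed
qed (use assms poly_fib_poly_fib_root in auto)

lemma rsquarefree_fib_poly: "0 < n \<Longrightarrow> rsquarefree (map_poly complex_of_int (fib_poly n))"
  by (rule rsquarefree_if_proots_eq_mset_set) (simp_all add: proots_fib_poly)

lemma poly_fib_poly_eq_0_iff:
  assumes "0 < n"
  shows "poly (map_poly complex_of_int (fib_poly n)) x = 0 \<longleftrightarrow> x \<in> fib_root n ` {0<..<n}"
  using arg_cong[OF proots_fib_poly[OF assms], of set_mset] assms by auto

section \<open>The roots of the fibotomic polynomial\<close>

definition fibotomic_factors :: "nat \<Rightarrow> int poly set" where
  "fibotomic_factors n = {q. lead_coeff q = 1 \<and> irreducible q \<and> q dvd fib_poly n \<and>
     (\<forall>k\<in>{1..<n}. \<not> q dvd fib_poly k)}"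

lemma fibotomic_eq_prod_factors: "n \<ge> 2 \<Longrightarrow> fibotomic n = \<Prod>(fibotomic_factors n)"
  by (simp add: fibotomic_def fibotomic_factors_def)

lemma prime_fibotomic_factor: "q \<in> fibotomic_factors n \<Longrightarrow> prime q"
  by (auto simp: fibotomic_factors_def prime_def normalize_poly_def one_pCons[symmetric]
           intro: irreducible_imp_prime_elem)

lemma fibotomic_factors_subset: "0 < n \<Longrightarrow> fibotomic_factors n \<subseteq> prime_factors (fib_poly n)"
  using prime_fibotomic_factor by (auto simp: fibotomic_factors_def intro!: prime_factorsI)

lemma finite_fibotomic_factors: "0 < n \<Longrightarrow> finite (fibotomic_factors n)"
  using fibotomic_factors_subset finite_subset by blast

lemma fibotomic_dvd_fib_poly: "n \<ge> 2 \<Longrightarrow> fibotomic n dvd fib_poly n"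
  by (simp add: fibotomic_eq_prod_factors prod_prime_factors_dvd fibotomic_factors_subset)

lemma fibotomic_factor_root_coprime:
  assumes n: "n \<ge> 2" and q: "q \<in> fibotomic_factors n"
    and root: "poly (map_poly complex_of_int q) x = 0"
  shows "x \<in> fib_root n ` totatives n"
proof -
  have "q dvd fib_poly n" using q by (simp add: fibotomic_factors_def)
  then have "poly (map_poly complex_of_int (fib_poly n)) x = 0"
    using root by (rule poly_map_poly_of_int_dvd_eq_0)
  then have "x \<in> fib_root n ` {0<..<n}"
    using n by (simp add: poly_fib_poly_eq_0_iff)
  then obtain k where k: "0 < k" "k < n" "x = fib_root n k" by auto
  have "coprime k n"
  proof (rule ccontr)
    assume "\<not> coprime k n"
    define d where "d = gcd k n"
    define m where "m = n div d"
    have "d \<noteq> 1" using \<open>\<not> coprime k n\<close> unfolding d_def by (metis coprime_iff_gcd_eq_1)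
    moreover have "d \<noteq> 0" using k(1) by (simp add: d_def)
    ultimately have "d > 1" by simp
    have "d dvd k" "d dvd n" by (simp_all add: d_def)
    then obtain a where a: "k = d * a" by (elim dvdE)
    have m: "n = d * m" using \<open>d dvd n\<close> by (simp add: m_def)
    have "0 < a" "a < m" using k(1,2) \<open>d > 1\<close> unfolding a m by simp_all
    then have "m < n" using \<open>d > 1\<close> m by (simp add: n_less_m_mult_n)
    have "x = fib_root m a"
      using k(3) fib_root_cancel[OF \<open>d dvd k\<close> \<open>d dvd n\<close>] \<open>d > 1\<close> by (simp add: a m_def)
    then have "poly (map_poly complex_of_int (fib_poly m)) x = 0"
      using poly_fib_poly_fib_root \<open>0 < a\<close> \<open>a < m\<close> by simp
    have "fib_poly m dvd fib_poly n" using m by (simp add: fib_poly_dvd)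
    then obtain h where h: "fib_poly n = fib_poly m * h" ..
    have "\<not> q dvd fib_poly m"
      using q \<open>0 < a\<close> \<open>a < m\<close> \<open>m < n\<close> by (simp add: fibotomic_factors_def)
    then have "q dvd h"
      using prime_fibotomic_factor[OF q] \<open>q dvd fib_poly n\<close> h by (simp add: prime_dvd_mult_iff)
    then have "poly (map_poly complex_of_int h) x = 0"
      using root by (rule poly_map_poly_of_int_dvd_eq_0)
    moreover have "rsquarefree (map_poly complex_of_int (fib_poly m) * map_poly complex_of_int h)"
      using rsquarefree_fib_poly[of n] n h by (simp add: map_poly_of_int_mult)
    ultimately show False
      using rsquarefree_mult_no_common_root \<open>poly (map_poly complex_of_int (fib_poly m)) x = 0\<close>
      by blast
  qed
  then show ?thesis using k by (auto simp: in_totatives_iff)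
qed

lemma fib_root_coprime_fibotomic_factor_root:
  assumes n: "n \<ge> 2" and k: "k \<in> totatives n"
  obtains q where "q \<in> fibotomic_factors n" "poly (map_poly complex_of_int q) (fib_root n k) = 0"
proof -
  have "k < n" using k n by (simp add: totatives_less)
  then have "poly (map_poly complex_of_int (fib_poly n)) (fib_root n k) = 0"
    using k by (simp add: poly_fib_poly_fib_root in_totatives_iff)
  moreover have "fib_poly n dvd prod_mset (prime_factorization (fib_poly n))"
    using prod_mset_prime_factorization_weak[of "fib_poly n"] n
    by (metis dvd_normalize_iff dvd_refl fib_poly_eq_0_iff not_numeral_le_zero)
  ultimately have "poly (map_poly complex_of_int (prod_mset (prime_factorization (fib_poly n))))
      (fib_root n k) = 0"
    by (rule poly_map_poly_of_int_dvd_eq_0[rotated])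
  then obtain q where q: "q \<in> prime_factors (fib_poly n)"
    and root: "poly (map_poly complex_of_int q) (fib_root n k) = 0"
    by (auto simp: map_poly_of_int_prod_mset poly_prod_mset prod_mset_zero_iff)
  have "\<not> q dvd fib_poly j" if j: "j \<in> {1..<n}" for j
  proof
    assume "q dvd fib_poly j"
    then have "poly (map_poly complex_of_int (fib_poly j)) (fib_root n k) = 0"
      using root by (rule poly_map_poly_of_int_dvd_eq_0)
    then obtain l where "l < j" "fib_root n k = fib_root j l"
      using j poly_fib_poly_eq_0_iff[of j] by auto
    then have "k * j = l * n"
      using j n \<open>k < n\<close> fib_root_eq_imp_mult_eq[of k n l j] by simp
    then have "n dvd k * j" by (metis dvd_triv_right)
    moreover have "coprime n k" using k by (simp add: in_totatives_iff coprime_commute)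
    ultimately have "n dvd j" by (simp add: coprime_dvd_mult_right_iff)
    then show False using j by (auto dest: dvd_imp_le)
  qed
  moreover have "prime q" "q dvd fib_poly n"
    using q by (auto intro: in_prime_factors_imp_prime)
  moreover have "lead_coeff q = 1"
    using \<open>prime q\<close> \<open>q dvd fib_poly n\<close> lead_coeff_fib_poly[of n] n
    by (simp add: lead_coeff_normalized_dvd_monic[of q "fib_poly n"])
  ultimately have "q \<in> fibotomic_factors n"
    by (auto simp: fibotomic_factors_def prime_elem_imp_irreducible)
  then show ?thesis using root by (rule that)
qed

lemma poly_fibotomic_eq_0_iff:
  assumes "n \<ge> 2"
  shows "poly (map_poly complex_of_int (fibotomic n)) x = 0 \<longleftrightarrow> x \<in> fib_root n ` totatives n"
proof -
  have "poly (map_poly complex_of_int (fibotomic n)) x = 0 \<longleftrightarrow>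
      (\<exists>q\<in>fibotomic_factors n. poly (map_poly complex_of_int q) x = 0)"
    using assms finite_fibotomic_factors[of n]
    by (simp add: fibotomic_eq_prod_factors map_poly_of_int_prod poly_prod prod_zero_iff)
  then show ?thesis
    using fibotomic_factor_root_coprime fib_root_coprime_fibotomic_factor_root assms by blast
qed

lemma proots_fibotomic:
  assumes "n \<ge> 2"
  shows "proots (map_poly complex_of_int (fibotomic n)) = mset_set (fib_root n ` totatives n)"
proof -
  have "rsquarefree (map_poly complex_of_int (fibotomic n))"
    using assms rsquarefree_fib_poly[of n] fibotomic_dvd_fib_poly[of n]
    by (auto intro: rsquarefree_dvd simp: map_poly_of_int_dvd)
  then show ?thesis
    using poly_fibotomic_eq_0_iff[OF assms] by (simp add: proots_eq_mset_set_if_rsquarefree)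
qed

section \<open>Roots of unity and the cyclotomic polynomial\<close>

definition unit_root :: "nat \<Rightarrow> nat \<Rightarrow> complex" where
  "unit_root n k = cis (2 * pi * real k / real n)"

lemma cis_eq_1_imp_dvd:
  fixes t :: int
  assumes "n > 0" "cis (2 * pi * real_of_int t / real n) = 1"
  shows "int n dvd t"
proof -
  have "cos (2 * pi * real_of_int t / real n) = 1"
    using arg_cong[OF assms(2), of Re] by simp
  then obtain k :: int where "2 * pi * real_of_int t / real n = real_of_int k * 2 * pi"
    by (auto simp: cos_one_2pi_int)
  then have "real_of_int t = real_of_int (k * int n)" using assms(1) by (simp add: field_simps)
  then show ?thesis by (simp only: of_int_eq_iff) simp
qed

lemma unit_root_eq_imp_eq:
  assumes "0 < n" "j < n" "l < n" "unit_root n j = unit_root n l"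
  shows "j = l"
proof -
  have "cis (2 * pi * real_of_int (int j - int l) / real n) = unit_root n j / unit_root n l"
    by (simp add: unit_root_def cis_divide diff_divide_distrib algebra_simps)
  also have "\<dots> = 1" using assms(4) by (simp add: unit_root_def)
  finally have "int n dvd int j - int l" using cis_eq_1_imp_dvd assms(1) by blast
  moreover have "\<bar>int j - int l\<bar> < int n" using assms(2,3) by simp
  ultimately show ?thesis by (metis dvd_imp_le_int abs_of_nat not_less eq_iff_diff_eq_0 of_nat_eq_iff)
qed

lemma unit_root_pow_eq_1: "unit_root n k ^ n = 1"
proof (cases "n = 0")
  case False
  then have "unit_root n k ^ n = cis (2 * pi * real k)"
    by (simp add: unit_root_def DeMoivre)
  also have "\<dots> = 1" by (simp add: complex_eq_iff)
  finally show ?thesis .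
qed simp

lemma unit_root_neq_1:
  assumes "0 < k" "k < n"
  shows "unit_root n k \<noteq> 1"
proof
  assume "unit_root n k = 1"
  then have "int n dvd int k"
    using cis_eq_1_imp_dvd[of n "int k"] assms by (simp add: unit_root_def)
  then show False using assms by (auto dest: dvd_imp_le)
qed

lemma unit_root_cancel:
  assumes "e dvd n" "0 < n"
  shows "unit_root (n div e) j = unit_root n (j * e)"
  using assms by (auto elim!: dvdE simp: unit_root_def mult.assoc)

lemma inj_on_unit_root_totatives: "n \<ge> 2 \<Longrightarrow> inj_on (unit_root n) (totatives n)"
  using unit_root_eq_imp_eq[of n] totatives_less[of _ n] by (auto intro!: inj_onI)

lemma cyclotomic_eq_prod_totatives:
  "cyclotomic n = (\<Prod>k\<in>totatives n. [:- unit_root n k, 1:])"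
  unfolding cyclotomic_def unit_root_def
  by (rule prod.cong) (auto simp: totatives_def)

lemma proots_cyclotomic:
  assumes "n \<ge> 2"
  shows "proots (cyclotomic n) = mset_set (unit_root n ` totatives n)"
proof -
  have "proots (cyclotomic n) = (\<Sum>k\<in>totatives n. proots [:- unit_root n k, 1:])"
    by (simp add: cyclotomic_eq_prod_totatives proots_prod)
  also have "\<dots> = (\<Sum>k\<in>totatives n. {#unit_root n k#})"
    by (intro sum.cong refl) (metis proots_linear_factor minus_minus)
  also have "\<dots> = (\<Sum>x\<in>unit_root n ` totatives n. {#x#})"
    using inj_on_unit_root_totatives[OF assms] by (simp only: sum.reindex comp_def)
  finally show ?thesis by simp
qed

lemma prod_one_minus_unit_roots:
  assumes "0 < n"
  shows "(\<Prod>k\<in>{0<..<n}. (1 - unit_root n k)) = of_nat n"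
proof -
  define p :: "complex poly" where "p = (\<Sum>i<n. Polynomial.monom 1 i)"
  have coeff_p: "Polynomial.coeff p i = (if i < n then 1 else 0)" for i
    by (simp add: p_def coeff_sum)
  have "degree p = n - 1"
    by (rule antisym; (rule degree_le le_degree)?) (use assms in \<open>auto simp: coeff_p\<close>)
  moreover from this have "lead_coeff p = 1" using assms by (simp add: coeff_p)
  moreover have poly_p: "poly p z = (\<Sum>i<n. z ^ i)" for z
    by (simp add: p_def poly_sum poly_monom)
  moreover have inj: "inj_on (unit_root n) {0<..<n}"
    using assms unit_root_eq_imp_eq[of n] by (auto intro!: inj_onI)
  ultimately have "proots p = mset_set (unit_root n ` {0<..<n})"
    using unit_root_neq_1 unit_root_pow_eq_1
    by (intro proots_eq_mset_setI) (auto simp: card_image geometric_sum)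
  then have "p = (\<Prod>x\<in>unit_root n ` {0<..<n}. [:- x, 1:])"
    using complex_poly_decompose_multiset[of p] \<open>lead_coeff p = 1\<close>
    by (simp add: prod_unfold_prod_mset)
  then have "poly p 1 = (\<Prod>k\<in>{0<..<n}. (1 - unit_root n k))"
    using inj by (simp add: poly_prod prod.reindex)
  then show ?thesis by (simp add: poly_p)
qed

lemma prod_one_minus_unit_roots_divisors:
  assumes "0 < n"
  shows "(\<Prod>k\<in>{0<..<n}. (1 - unit_root n k))
       = (\<Prod>d | d dvd n \<and> d \<noteq> 1. \<Prod>k\<in>totatives d. (1 - unit_root d k))"
proof -
  define A where "A e = {k\<in>{0<..n}. gcd k n = e}" for e
  define Q where "Q d = (\<Prod>k\<in>totatives d. (1 - unit_root d k))" for d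
  have "{0<..<n} = (\<Union>e\<in>{e. e dvd n \<and> e \<noteq> n}. A e)"
  proof (intro equalityI subsetI)
    fix k assume k: "k \<in> {0<..<n}"
    have "gcd k n \<noteq> n"
    proof
      assume "gcd k n = n"
      then have "n dvd k" by (metis gcd_dvd1)
      with k show False by (auto dest: dvd_imp_le)
    qed
    with k show "k \<in> (\<Union>e\<in>{e. e dvd n \<and> e \<noteq> n}. A e)" by (auto simp: A_def)
  next
    fix k assume "k \<in> (\<Union>e\<in>{e. e dvd n \<and> e \<noteq> n}. A e)"
    then have "0 < k" "k \<le> n" "gcd k n \<noteq> n" by (auto simp: A_def)
    then show "k \<in> {0<..<n}" by (cases "k = n") auto
  qed
  then have "(\<Prod>k\<in>{0<..<n}. (1 - unit_root n k)) = (\<Prod>e | e dvd n \<and> e \<noteq> n. \<Prod>k\<in>A e. (1 - unit_root n k))"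
    using assms by (simp only:) (rule prod.UNION_disjoint; auto simp: A_def)
  also have "\<dots> = (\<Prod>e | e dvd n \<and> e \<noteq> n. Q (n div e))"
  proof (rule prod.cong[OF refl])
    fix e assume "e \<in> {e. e dvd n \<and> e \<noteq> n}"
    then have "e dvd n" by simp
    have "(\<Prod>k\<in>A e. (1 - unit_root n k)) = (\<Prod>j\<in>totatives (n div e). (1 - unit_root n (j * e)))"
      unfolding A_def
      by (rule prod.reindex_bij_betw[OF bij_betw_totatives_gcd_eq[OF \<open>e dvd n\<close> assms], symmetric])
    also have "\<dots> = Q (n div e)"
      using \<open>e dvd n\<close> assms by (simp add: Q_def unit_root_cancel)
    finally show "(\<Prod>k\<in>A e. (1 - unit_root n k)) = Q (n div e)" .
  qed
  also have "\<dots> = (\<Prod>d | d dvd n \<and> d \<noteq> 1. Q d)"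
    using assms by (intro prod.reindex_bij_witness[of _ "(div) n" "(div) n"]) (auto elim!: dvdE)
  finally show ?thesis by (simp add: Q_def)
qed

definition exp_mangoldt :: "nat \<Rightarrow> nat" where
  "exp_mangoldt d = (if primepow d then aprimedivisor d else 1)"

lemma exp_mangoldt_pos: "exp_mangoldt d > 0"
  by (auto simp: exp_mangoldt_def intro!: aprimedivisor_pos_nat primepow_gt_Suc_0)

lemma prod_exp_mangoldt_divisors:
  assumes "0 < n"
  shows "(\<Prod>d | d dvd n \<and> d \<noteq> 1. exp_mangoldt d) = n"
proof -
  have "(mangoldt d :: real) = ln (real (exp_mangoldt d))" for d
    by (simp add: mangoldt_def exp_mangoldt_def)
  then have "ln (real (\<Prod>d | d dvd n. exp_mangoldt d)) = (\<Sum>d | d dvd n. mangoldt d :: real)"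
    using assms exp_mangoldt_pos by (simp add: ln_prod)
  also have "\<dots> = ln (real n)" using mangoldt_sum[of n, where 'a = real] assms by simp
  finally have "real (\<Prod>d | d dvd n. exp_mangoldt d) = real n"
    using assms exp_mangoldt_pos by (subst (asm) ln_inj_iff) (auto intro!: prod_pos)
  then have "(\<Prod>d | d dvd n. exp_mangoldt d) = n" by (simp only: of_nat_eq_iff)
  moreover have "{d. d dvd n} = insert 1 {d. d dvd n \<and> d \<noteq> 1}" by auto
  moreover have "finite {d. d dvd n \<and> d \<noteq> 1}"
    using assms by (auto intro: finite_subset[of _ "{d. d dvd n}"])
  moreover have "exp_mangoldt 1 = 1" by (simp add: exp_mangoldt_def)
  ultimately show ?thesis by simp
qed

text \<open>The value \<open>\<Phi>\<^sub>n(1)\<close> of the cyclotomic polynomial: by induction over the divisors, since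
  both sides multiply to \<open>n\<close> over the divisors \<open>d > 1\<close> of \<open>n\<close>.\<close>

lemma prod_one_minus_primitive_unit_roots:
  assumes "n \<ge> 2"
  shows "(\<Prod>k\<in>totatives n. (1 - unit_root n k)) = of_nat (exp_mangoldt n)"
  using assms
proof (induction n rule: less_induct)
  case (less n)
  define Q where "Q d = (\<Prod>k\<in>totatives d. (1 - unit_root d k))" for d
  define D where "D = {d. d dvd n \<and> d \<noteq> 1 \<and> d \<noteq> n}"
  have fin: "finite D" using less.prems by (simp add: D_def)
  have divisors: "{d. d dvd n \<and> d \<noteq> 1} = insert n D" "n \<notin> D"
    using less.prems by (auto simp: D_def)
  have "Q d = of_nat (exp_mangoldt d)" if "d \<in> D" for d
  proof -
    have "d dvd n" "d \<noteq> 1" "d \<noteq> n" using that by (simp_all add: D_def)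
    moreover have "d \<noteq> 0" using \<open>d dvd n\<close> less.prems by (cases "d = 0") auto
    ultimately have "d < n" "d \<ge> 2" using less.prems by (auto dest: dvd_imp_le)
    then show ?thesis using less.IH by (simp add: Q_def)
  qed
  then have "(\<Prod>d\<in>D. Q d) = (\<Prod>d\<in>D. of_nat (exp_mangoldt d))" by simp
  moreover have "Q n * (\<Prod>d\<in>D. Q d) = of_nat (exp_mangoldt n) * (\<Prod>d\<in>D. of_nat (exp_mangoldt d))"
    using prod_one_minus_unit_roots_divisors[of n] prod_one_minus_unit_roots[of n]
      prod_exp_mangoldt_divisors[of n] less.prems fin divisors
    by (simp add: Q_def flip: of_nat_prod of_nat_mult)
  moreover have "(\<Prod>d\<in>D. of_nat (exp_mangoldt d) :: complex) \<noteq> 0"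
    using exp_mangoldt_pos fin by simp
  ultimately show ?case by (simp add: Q_def)
qed

section \<open>The discriminant ratio\<close>

definition half_unit_root :: "nat \<Rightarrow> nat \<Rightarrow> complex" where
  "half_unit_root n k = cis (real k * pi / real n)"

lemma half_unit_root_nonzero [simp]: "half_unit_root n k \<noteq> 0"
  by (simp add: half_unit_root_def)

lemma fib_root_eq_half_unit_root:
  "fib_root n k = \<i> * (half_unit_root n k + inverse (half_unit_root n k))"
proof -
  have "cis x + inverse (cis x) = 2 * complex_of_real (cos x)" for x
    by (simp add: complex_eq_iff)
  then show ?thesis by (simp add: fib_root_def half_unit_root_def)
qed

lemma unit_root_eq_half_unit_root: "unit_root n k = half_unit_root n k ^ 2"
  by (simp add: unit_root_def half_unit_root_def DeMoivre algebra_simps)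

lemma half_unit_root_reflect:
  assumes "k \<le> n" "0 < n"
  shows "half_unit_root n (n - k) = - inverse (half_unit_root n k)"
proof -
  have "real (n - k) * pi / real n = pi - real k * pi / real n"
    using assms by (simp add: of_nat_diff field_simps)
  then show ?thesis
    by (simp add: half_unit_root_def cis_divide[symmetric] inverse_eq_divide)
qed

lemma diff_in_totatives:
  assumes "n \<ge> 2" "k \<in> totatives n"
  shows "n - k \<in> totatives n"
proof -
  have "k < n" using assms by (simp add: totatives_less)
  then have "gcd (n - k) n = gcd k n" by (simp add: gcd_diff2_nat)
  moreover have "coprime k n" using assms(2) by (simp add: in_totatives_iff)
  ultimately have "coprime (n - k) n" by (metis coprime_iff_gcd_eq_1)
  then show ?thesis using \<open>k < n\<close> by (simp add: in_totatives_iff)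
qed

lemma sum_totatives:
  assumes "n \<ge> 2"
  shows "2 * \<Sum>(totatives n) = n * totient n"
proof -
  have "\<Sum>(totatives n) = (\<Sum>k\<in>totatives n. n - k)"
    by (rule sum.reindex_bij_witness[where i = "\<lambda>k. n - k" and j = "\<lambda>k. n - k"])
       (use assms diff_in_totatives totatives_le in auto)
  then have "2 * \<Sum>(totatives n) = (\<Sum>k\<in>totatives n. k + (n - k))"
    by (simp add: sum.distrib)
  also have "\<dots> = n * totient n"
    using totatives_le by (simp add: totient_def)
  finally show ?thesis .
qed

lemma prod_cis: "(\<Prod>k\<in>A. cis (f k)) = cis (\<Sum>k\<in>A. f k)"
  by (induction A rule: infinite_finite_induct) (simp_all add: cis_mult)

lemma prod_half_unit_roots:
  assumes "n \<ge> 2"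
  shows "(\<Prod>k\<in>totatives n. half_unit_root n k) = \<i> ^ totient n"
proof -
  have "(\<Prod>k\<in>totatives n. half_unit_root n k) = cis (\<Sum>k\<in>totatives n. real k * pi / real n)"
    unfolding half_unit_root_def by (rule prod_cis)
  also have "(\<Sum>k\<in>totatives n. real k * pi / real n) = real (\<Sum>(totatives n)) * pi / real n"
    by (simp add: sum_divide_distrib sum_distrib_right)
  also have "\<dots> = real (totient n) * (pi / 2)"
    using arg_cong[OF sum_totatives[OF assms], of real] assms by (simp add: field_simps)
  also have "cis \<dots> = cis (pi / 2) ^ totient n"
    by (simp only: DeMoivre)
  also have "cis (pi / 2) = \<i>"
    by (simp add: complex_eq_iff)
  finally show ?thesis .
qed

lemma prod_fib_root_diffs:
  fixes n :: nat and A :: "nat set"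
  defines "a \<equiv> half_unit_root n"
  assumes "finite A"
  shows "(\<Prod>k\<in>A. \<Prod>l\<in>A - {k}. (fib_root n k - fib_root n l))
       = (\<i> ^ (card A - 1)) ^ card A * (\<Prod>k\<in>A. \<Prod>l\<in>A - {k}. (a k - a l))
         * (\<Prod>k\<in>A. \<Prod>l\<in>A - {k}. (1 - inverse (a k * a l)))"
proof -
  have "fib_root n k - fib_root n l = \<i> * ((a k - a l) * (1 - inverse (a k * a l)))" for k l
    by (simp add: a_def fib_root_eq_half_unit_root field_simps)
  then have "(\<Prod>l\<in>A - {k}. (fib_root n k - fib_root n l))
      = \<i> ^ (card A - 1) * ((\<Prod>l\<in>A - {k}. (a k - a l)) * (\<Prod>l\<in>A - {k}. (1 - inverse (a k * a l))))"
    if "k \<in> A" for k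
    using that assms(2) by (simp add: prod.distrib)
  then show ?thesis
    by (simp add: prod.distrib mult.assoc)
qed

lemma prod_unit_root_diffs:
  fixes n :: nat and A :: "nat set"
  defines "a \<equiv> half_unit_root n"
  shows "(\<Prod>k\<in>A. \<Prod>l\<in>A - {k}. (unit_root n k - unit_root n l))
       = (\<Prod>k\<in>A. \<Prod>l\<in>A - {k}. (a k - a l)) * (\<Prod>k\<in>A. \<Prod>l\<in>A - {k}. (a k + a l))"
proof -
  have "unit_root n k - unit_root n l = (a k - a l) * (a k + a l)" for k l
    by (simp add: a_def unit_root_eq_half_unit_root power2_eq_square algebra_simps)
  then show ?thesis by (simp add: prod.distrib)
qed

text \<open>The reflection \<open>l \<mapsto> n - l\<close> of the totatives turns \<open>1 - (a\<^sub>k a\<^sub>l)\<inverse>\<close> into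
  \<open>(a\<^sub>k + a\<^sub>l) / a\<^sub>k\<close>, because \<open>a\<^bsub>n-l\<^esub> = -a\<^sub>l\<inverse>\<close>; only the factors \<open>l = k\<close> and \<open>l = n - k\<close> are
  exchanged.\<close>

lemma prod_one_minus_inverse_reflect:
  assumes "n \<ge> 2" "k \<in> totatives n"
  defines "a \<equiv> half_unit_root n" and "T \<equiv> totatives n"
  shows "(\<Prod>l\<in>T - {k}. (1 - inverse (a k * a l))) * (a k ^ 2 - 1) * a k ^ (totient n - 1)
       = 2 * a k ^ 2 * (\<Prod>l\<in>T - {k}. (a k + a l))"
proof -
  define g where "g l = (a k + a l) / a k" for l
  have a_nonzero: "a l \<noteq> 0" for l by (simp add: a_def)
  have a_reflect: "a (n - l) = - inverse (a l)" if "l \<in> T" for l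
    using that assms(1) totatives_le by (simp add: a_def T_def half_unit_root_reflect)
  have T_reflect: "n - l \<in> T" "n - (n - l) = l" if "l \<in> T" for l
    using that assms(1) diff_in_totatives totatives_le by (auto simp: T_def)
  have "(\<Prod>l\<in>T - {n - k}. g l) = (\<Prod>l\<in>T - {k}. (1 - inverse (a k * a l)))"
  proof (rule prod.reindex_bij_witness[where i = "\<lambda>l. n - l" and j = "\<lambda>l. n - l"])
    fix l assume l: "l \<in> T - {n - k}"
    show "n - (n - l) = l" "n - l \<in> T - {k}"
      using l T_reflect[of l] T_reflect[of k] assms(2) by (auto simp: T_def)
    have reflect: "a (n - l) = - inverse (a l)" using l by (simp add: a_reflect)
    show "1 - inverse (a k * a (n - l)) = g l"
      unfolding reflect g_def using a_nonzero[of k] a_nonzero[of l] by (simp add: field_simps)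
  next
    fix l assume l: "l \<in> T - {k}"
    show "n - (n - l) = l" "n - l \<in> T - {n - k}"
      using l T_reflect[of l] assms(2) totatives_le[of l n] totatives_le[of k n] by (auto simp: T_def)
  qed
  moreover have "(\<Prod>l\<in>T. g l) = g (n - k) * (\<Prod>l\<in>T - {n - k}. g l)"
    using T_reflect[of k] assms(2) by (intro prod.remove) (auto simp: T_def)
  moreover have "(\<Prod>l\<in>T. g l) = g k * (\<Prod>l\<in>T - {k}. g l)"
    using assms(2) by (intro prod.remove) (auto simp: T_def)
  moreover have "g k = 2" "g (n - k) = (a k - inverse (a k)) / a k"
    using a_reflect[of k] assms(2) by (simp_all add: g_def a_def T_def)
  moreover have "(\<Prod>l\<in>T - {k}. g l) = (\<Prod>l\<in>T - {k}. (a k + a l)) / a k ^ (totient n - 1)"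
    using assms(2) by (simp add: g_def prod_dividef T_def totient_def)
  ultimately show ?thesis
    by (simp add: a_def field_simps power2_eq_square)
qed

lemma prod_one_minus_inverse_reflect_totatives:
  assumes "n \<ge> 2"
  defines "a \<equiv> half_unit_root n" and "T \<equiv> totatives n" and "m \<equiv> totient n"
  shows "(\<Prod>k\<in>T. \<Prod>l\<in>T - {k}. (1 - inverse (a k * a l))) * (\<Prod>k\<in>T. (a k ^ 2 - 1))
           * (\<Prod>k\<in>T. a k) ^ (m - 1)
       = 2 ^ m * (\<Prod>k\<in>T. a k) ^ 2 * (\<Prod>k\<in>T. \<Prod>l\<in>T - {k}. (a k + a l))"
proof -
  have "(\<Prod>k\<in>T. \<Prod>l\<in>T - {k}. (1 - inverse (a k * a l))) * (\<Prod>k\<in>T. (a k ^ 2 - 1))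
        * (\<Prod>k\<in>T. a k) ^ (m - 1)
      = (\<Prod>k\<in>T. (\<Prod>l\<in>T - {k}. (1 - inverse (a k * a l))) * (a k ^ 2 - 1) * a k ^ (m - 1))"
    by (simp add: prod.distrib prod_power_distrib)
  also have "\<dots> = (\<Prod>k\<in>T. 2 * a k ^ 2 * (\<Prod>l\<in>T - {k}. (a k + a l)))"
    by (rule prod.cong[OF refl])
      (use prod_one_minus_inverse_reflect[OF assms(1)] in \<open>simp add: T_def m_def a_def\<close>)
  also have "\<dots> = 2 ^ m * (\<Prod>k\<in>T. a k) ^ 2 * (\<Prod>k\<in>T. \<Prod>l\<in>T - {k}. (a k + a l))"
    by (simp add: prod.distrib prod_power_distrib T_def m_def totient_def)
  finally show ?thesis .
qed

lemma prod_fib_root_diffs_times_prod_one_minus_unit_roots: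
  assumes "n \<ge> 2"
  shows "(\<Prod>k\<in>totatives n. \<Prod>l\<in>totatives n - {k}. (fib_root n k - fib_root n l))
           * (\<Prod>k\<in>totatives n. (1 - unit_root n k))
       = 2 ^ totient n * (\<Prod>k\<in>totatives n. \<Prod>l\<in>totatives n - {k}. (unit_root n k - unit_root n l))"
proof -
  define T m a where "T = totatives n" and "m = totient n" and "a = half_unit_root n"
  define P where "P = (\<Prod>k\<in>T. a k)"
  define Dm where "Dm = (\<Prod>k\<in>T. \<Prod>l\<in>T - {k}. (a k - a l))"
  define Dp where "Dp = (\<Prod>k\<in>T. \<Prod>l\<in>T - {k}. (a k + a l))"
  define H where "H = (\<Prod>k\<in>T. \<Prod>l\<in>T - {k}. (1 - inverse (a k * a l)))"
  have P: "P = \<i> ^ m"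
    using prod_half_unit_roots[OF assms] by (simp add: P_def T_def m_def a_def)
  have "(\<Prod>k\<in>T. (1 - unit_root n k)) = (-1) ^ m * (\<Prod>k\<in>T. (a k ^ 2 - 1))"
    by (simp add: unit_root_eq_half_unit_root a_def T_def m_def totient_def flip: prod_uminus)
  then have "(\<Prod>k\<in>T. \<Prod>l\<in>T - {k}. (fib_root n k - fib_root n l)) * (\<Prod>k\<in>T. (1 - unit_root n k))
      = (-1) ^ m * Dm * (H * (\<Prod>k\<in>T. (a k ^ 2 - 1)) * P ^ (m - 1))"
    using prod_fib_root_diffs[of T n]
    by (simp add: P Dm_def H_def T_def m_def a_def totient_def power_mult[symmetric] mult.commute)
  also have "\<dots> = (-1) ^ m * Dm * (2 ^ m * P ^ 2 * Dp)"
    using prod_one_minus_inverse_reflect_totatives[OF assms]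
    by (simp only: H_def P_def Dp_def T_def m_def a_def)
  also have "\<dots> = 2 ^ m * (Dm * Dp)"
  proof -
    have "P ^ 2 = (-1) ^ m" by (simp add: P flip: power_mult power_mult_distrib)
    moreover have "(-1 :: complex) ^ m * (-1) ^ m = 1" by (simp flip: power_mult_distrib)
    ultimately show ?thesis by (simp add: algebra_simps)
  qed
  also have "\<dots> = 2 ^ m * (\<Prod>k\<in>T. \<Prod>l\<in>T - {k}. (unit_root n k - unit_root n l))"
    by (simp add: prod_unit_root_diffs Dm_def Dp_def a_def)
  finally show ?thesis by (simp add: T_def m_def)
qed

lemma disc_fibotomic_div_disc_cyclotomic:
  assumes "n \<ge> 2"
  shows "disc (map_poly of_int (fibotomic n)) / disc (cyclotomic n)
       = 2 ^ totient n / of_nat (exp_mangoldt n)"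
proof -
  define T where "T = totatives n"
  define Dy where "Dy = (\<Prod>k\<in>T. \<Prod>l\<in>T - {k}. (fib_root n k - fib_root n l))"
  define Dz where "Dz = (\<Prod>k\<in>T. \<Prod>l\<in>T - {k}. (unit_root n k - unit_root n l))"
  have inj_fib: "inj_on (fib_root n) T"
    using inj_on_fib_root[of n] totatives_le[of _ n] by (auto simp: T_def intro: inj_on_subset)
  have inj_unit: "inj_on (unit_root n) T"
    using inj_on_unit_root_totatives[OF assms] by (simp add: T_def)
  have "disc (map_poly of_int (fibotomic n)) = disc_sign (totient n) * Dy"
    using disc_eq_root_diff_prod[OF proots_fibotomic[OF assms]] root_diff_prod_image[OF inj_fib] inj_fib
    by (simp add: Dy_def T_def card_image totient_def)
  moreover have "disc (cyclotomic n) = disc_sign (totient n) * Dz"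
    using disc_eq_root_diff_prod[OF proots_cyclotomic[OF assms]] root_diff_prod_image[OF inj_unit] inj_unit
    by (simp add: Dz_def T_def card_image totient_def)
  moreover have "Dz \<noteq> 0"
    using inj_unit by (auto simp: Dz_def T_def inj_on_def)
  moreover have "disc_sign (totient n) \<noteq> 0"
    using disc_sign_square[of "totient n"] by auto
  moreover have "Dy * of_nat (exp_mangoldt n) = 2 ^ totient n * Dz"
    using prod_fib_root_diffs_times_prod_one_minus_unit_roots[OF assms]
      prod_one_minus_primitive_unit_roots[OF assms]
    by (simp add: Dy_def Dz_def T_def)
  ultimately show ?thesis
    using exp_mangoldt_pos[of n] by (simp add: field_simps)
qed

theorem mainTheorem7:
  fixes n :: nat
  assumes "n \<ge> 2"
  shows "(\<forall>p \<alpha>. prime p \<and> \<alpha> > 0 \<and> n = p ^ \<alpha> \<longrightarrow>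
            disc (map_poly of_int (fibotomic n)) / disc (cyclotomic n) =
              2 ^ totient n / of_nat p)
       \<and> ((\<nexists>p \<alpha>. prime p \<and> \<alpha> > 0 \<and> n = p ^ \<alpha>) \<longrightarrow>
            disc (map_poly of_int (fibotomic n)) / disc (cyclotomic n) = 2 ^ totient n)"
proof (intro conjI allI impI)
  fix p \<alpha> :: nat
  assume "prime p \<and> \<alpha> > 0 \<and> n = p ^ \<alpha>"
  then have "exp_mangoldt n = p" by (auto simp: exp_mangoldt_def aprimedivisor_prime_power)
  then show "disc (map_poly of_int (fibotomic n)) / disc (cyclotomic n) = 2 ^ totient n / of_nat p"
    using disc_fibotomic_div_disc_cyclotomic[OF assms] by simp
next
  assume "\<nexists>p \<alpha>. prime p \<and> \<alpha> > 0 \<and> n = p ^ \<alpha>"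
  then have "\<not> primepow n" by (auto simp: primepow_def)
  then have "exp_mangoldt n = 1" by (simp add: exp_mangoldt_def)
  then show "disc (map_poly of_int (fibotomic n)) / disc (cyclotomic n) = 2 ^ totient n"
    using disc_fibotomic_div_disc_cyclotomic[OF assms] by simp
qed

end
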